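(* Every strong locally super-compact $L$-topological space is locally super-compact.
   Context: $L$ is a frame with implication $\to$. $L$-subsets of $X$: maps $X\to L$; nonempty: $\bigvee_xA(x)=1$; ${\rm sub}_X(A,B)=\bigwedge_xA(x)\to B(x)$. $L$-topology: $\mathcal O(X)\subseteq L^X$ closed under finite meets and arbitrary joins containing all constants $a_X$; interior $A^\circ=\bigvee\{B\in\mathcal O(X):B\le A\}$. A base is $\mathcal B\subseteq\mathcal O(X)$ with $A=\bigvee_{B\in\mathcal B}{\rm sub}_X(B,A)\wedge B$ for every open $A$. Super-compact: nonempty $A\in L^X$ with ${\rm sub}_X(A,\bigvee_iV_i)=\bigvee_i{\rm sub}_X(A,V_i)$ for every family of open $V_i$; ${\rm SC}(X)$ their set. Locally super-compact: every open $A=\bigvee_{B\in{\rm SC}(X)}{\rm sub}_X(B,A)\wedge B^\circ$. Strong locally super-compact: $X$ has a base consisting of super-compact open sets. *)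

theory Defs
  imports Main
begin

text \<open>A frame L with implication: a complete lattice of type 'l together with an
operation imp satisfying the Heyting adjunction c \<le> (a \<rightarrow> b) iff c \<sqinter> a \<le> b.
(The adjunction forces finite meets to distribute over arbitrary joins, i.e. L is a frame.)
L-subsets of X are functions X \<Rightarrow> L, where the space X is the universe of the type 'a.\<close>

definition frame_imp :: "('l::complete_lattice \<Rightarrow> 'l \<Rightarrow> 'l) \<Rightarrow> bool" where
  "frame_imp imp \<longleftrightarrow> (\<forall>a b c. c \<le> imp a b \<longleftrightarrow> inf c a \<le> b)"

definition lsub :: "('l::complete_lattice \<Rightarrow> 'l \<Rightarrow> 'l) \<Rightarrow> ('a \<Rightarrow> 'l) \<Rightarrow> ('a \<Rightarrow> 'l) \<Rightarrow> 'l" where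
  "lsub imp A B = (INF x. imp (A x) (B x))"

definition lnonempty :: "('a \<Rightarrow> 'l::complete_lattice) \<Rightarrow> bool" where
  "lnonempty A \<longleftrightarrow> (SUP x. A x) = top"

definition ltopology :: "('a \<Rightarrow> 'l::complete_lattice) set \<Rightarrow> bool" where
  "ltopology T \<longleftrightarrow>
     (\<forall>A\<in>T. \<forall>B\<in>T. inf A B \<in> T) \<and> (\<forall>S. S \<subseteq> T \<longrightarrow> Sup S \<in> T) \<and> (\<forall>a. (\<lambda>_. a) \<in> T)"

definition linterior :: "('a \<Rightarrow> 'l::complete_lattice) set \<Rightarrow> ('a \<Rightarrow> 'l) \<Rightarrow> ('a \<Rightarrow> 'l)" where
  "linterior T A = Sup {B \<in> T. B \<le> A}"

definition lbase :: "('l::complete_lattice \<Rightarrow> 'l \<Rightarrow> 'l) \<Rightarrow> ('a \<Rightarrow> 'l) set \<Rightarrow> ('a \<Rightarrow> 'l) set \<Rightarrow> bool" where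
  "lbase imp T \<B> \<longleftrightarrow> \<B> \<subseteq> T \<and>
     (\<forall>A\<in>T. A = (SUP B\<in>\<B>. (\<lambda>x. inf (lsub imp B A) (B x))))"

text \<open>Families of open sets are represented by their (arbitrary) sets of members;
the joins involved only depend on the set of members.\<close>
definition super_compact :: "('l::complete_lattice \<Rightarrow> 'l \<Rightarrow> 'l) \<Rightarrow> ('a \<Rightarrow> 'l) set \<Rightarrow> ('a \<Rightarrow> 'l) \<Rightarrow> bool" where
  "super_compact imp T A \<longleftrightarrow> lnonempty A \<and>
     (\<forall>\<V>. \<V> \<subseteq> T \<longrightarrow> lsub imp A (Sup \<V>) = (SUP V\<in>\<V>. lsub imp A V))"

definition SC :: "('l::complete_lattice \<Rightarrow> 'l \<Rightarrow> 'l) \<Rightarrow> ('a \<Rightarrow> 'l) set \<Rightarrow> ('a \<Rightarrow> 'l) set" where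
  "SC imp T = {A. super_compact imp T A}"

definition locally_super_compact :: "('l::complete_lattice \<Rightarrow> 'l \<Rightarrow> 'l) \<Rightarrow> ('a \<Rightarrow> 'l) set \<Rightarrow> bool" where
  "locally_super_compact imp T \<longleftrightarrow>
     (\<forall>A\<in>T. A = (SUP B\<in>SC imp T. (\<lambda>x. inf (lsub imp B A) (linterior T B x))))"

definition strong_locally_super_compact :: "('l::complete_lattice \<Rightarrow> 'l \<Rightarrow> 'l) \<Rightarrow> ('a \<Rightarrow> 'l) set \<Rightarrow> bool" where
  "strong_locally_super_compact imp T \<longleftrightarrow>
     (\<exists>\<B>. lbase imp T \<B> \<and> (\<forall>B\<in>\<B>. super_compact imp T B))"

end

theory Submission
  imports Defs
begin

text \<open>Every open A is below the join over all super-compact B of sub(B, A) \<and> B\<degree>,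
  because a base of super-compact open sets already exhausts A and open sets are their
  own interiors. Conversely, each term of that join lies below A by modus ponens for the
  implication.\<close>

lemma frame_imp_modus_ponens: "frame_imp imp \<Longrightarrow> inf (imp a b) a \<le> b"
  unfolding frame_imp_def by blast

lemma lsub_le_imp: "lsub imp B A \<le> imp (B x) (A x)"
  unfolding lsub_def by (rule INF_lower) simp

lemma lsub_inf_le:
  assumes "frame_imp imp"
  shows "inf (lsub imp B A) (B x) \<le> A x"
proof -
  have "inf (lsub imp B A) (B x) \<le> inf (imp (B x) (A x)) (B x)"
    using lsub_le_imp by (rule inf_mono) simp
  also have "\<dots> \<le> A x"
    using assms by (rule frame_imp_modus_ponens)
  finally show ?thesis .
qed

lemma linterior_le: "linterior T B \<le> B"
  unfolding linterior_def by (rule Sup_least) auto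

lemma linterior_open: "B \<in> T \<Longrightarrow> linterior T B = B"
  unfolding linterior_def by (rule antisym) (auto intro: Sup_least Sup_upper)

lemma SUP_lsub_inf_linterior_le:
  assumes "frame_imp imp"
  shows "(SUP B\<in>\<C>. (\<lambda>x. inf (lsub imp B A) (linterior T B x))) \<le> A"
proof (rule SUP_least, rule le_funI)
  fix B x
  have "inf (lsub imp B A) (linterior T B x) \<le> inf (lsub imp B A) (B x)"
    using linterior_le by (metis inf_mono le_funD order_refl)
  also have "\<dots> \<le> A x"
    using assms by (rule lsub_inf_le)
  finally show "inf (lsub imp B A) (linterior T B x) \<le> A x" .
qed

lemma SUP_lsub_inf_open_le_linterior:
  assumes "\<B> \<subseteq> T" and "\<B> \<subseteq> \<C>"
  shows "(SUP B\<in>\<B>. (\<lambda>x. inf (lsub imp B A) (B x)))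
           \<le> (SUP B\<in>\<C>. (\<lambda>x. inf (lsub imp B A) (linterior T B x)))"
proof (rule SUP_least)
  fix B assume "B \<in> \<B>"
  with assms(1) have "linterior T B = B"
    by (auto intro: linterior_open)
  then have "(\<lambda>x. inf (lsub imp B A) (B x)) = (\<lambda>x. inf (lsub imp B A) (linterior T B x))"
    by simp
  also have "\<dots> \<le> (SUP B\<in>\<C>. (\<lambda>x. inf (lsub imp B A) (linterior T B x)))"
    using \<open>B \<in> \<B>\<close> assms(2) by (auto intro: SUP_upper)
  finally show "(\<lambda>x. inf (lsub imp B A) (B x))
                  \<le> (SUP B\<in>\<C>. (\<lambda>x. inf (lsub imp B A) (linterior T B x)))" .
qed

theorem proposition5p5:
  fixes imp :: "'l::complete_lattice \<Rightarrow> 'l \<Rightarrow> 'l"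
    and T :: "('a \<Rightarrow> 'l) set"
  assumes "frame_imp imp"
    and "ltopology T"
    and "strong_locally_super_compact imp T"
  shows "locally_super_compact imp T"
  unfolding locally_super_compact_def
proof
  obtain \<B> where base: "lbase imp T \<B>" and sc: "\<forall>B\<in>\<B>. super_compact imp T B"
    using assms(3) unfolding strong_locally_super_compact_def by blast
  have "\<B> \<subseteq> T" "\<B> \<subseteq> SC imp T"
    using base sc unfolding lbase_def SC_def by auto
  fix A assume "A \<in> T"
  then have "A = (SUP B\<in>\<B>. (\<lambda>x. inf (lsub imp B A) (B x)))"
    using base unfolding lbase_def by blast
  also have "\<dots> \<le> (SUP B\<in>SC imp T. (\<lambda>x. inf (lsub imp B A) (linterior T B x)))"
    using \<open>\<B> \<subseteq> T\<close> \<open>\<B> \<subseteq> SC imp T\<close> by (rule SUP_lsub_inf_open_le_linterior)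
  finally show "A = (SUP B\<in>SC imp T. (\<lambda>x. inf (lsub imp B A) (linterior T B x)))"
    using SUP_lsub_inf_linterior_le[OF assms(1)] by (rule antisym)
qed

end
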